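(* Every convex polyiamond can be domed.
   Context: All equilateral triangles have unit edge length. A polyiamond is a polygon that is a union of unit equilateral triangles glued edge to edge. A convex polygon $P$ can be domed if there is a convex polyhedron that has $P$ as one face and all of whose other faces are convex polyiamonds. *)

theory Defs
  imports "HOL-Analysis.Analysis"
begin

definition unit_triangle :: "(real^3) set \<Rightarrow> bool" where
  "unit_triangle t \<longleftrightarrow>
     (\<exists>a b c. t = convex hull {a, b, c} \<and> dist a b = 1 \<and> dist b c = 1 \<and> dist a c = 1)"

text \<open>A polyiamond: a (planar) polygon which is the union of finitely many unit
equilateral triangles glued edge to edge, i.e. any two distinct triangles meet in
a common face of both (empty, a common vertex, or a common edge).\<close>
definition polyiamond :: "(real^3) set \<Rightarrow> bool" where
  "polyiamond P \<longleftrightarrow> aff_dim P = 2 \<and>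
     (\<exists>T. finite T \<and> T \<noteq> {} \<and> (\<forall>t\<in>T. unit_triangle t) \<and> P = \<Union>T \<and>
        (\<forall>t1\<in>T. \<forall>t2\<in>T. t1 \<noteq> t2 \<longrightarrow> (t1 \<inter> t2) face_of t1 \<and> (t1 \<inter> t2) face_of t2))"

definition convex_polyiamond :: "(real^3) set \<Rightarrow> bool" where
  "convex_polyiamond P \<longleftrightarrow> convex P \<and> polyiamond P"

text \<open>A convex polyhedron: a 3-dimensional convex polytope in R^3; its faces are its facets.\<close>
definition convex_polyhedron :: "(real^3) set \<Rightarrow> bool" where
  "convex_polyhedron Q \<longleftrightarrow> polytope Q \<and> aff_dim Q = 3"

definition can_be_domed :: "(real^3) set \<Rightarrow> bool" where
  "can_be_domed P \<longleftrightarrow>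
     (\<exists>Q. convex_polyhedron Q \<and> P facet_of Q \<and>
          (\<forall>F. F facet_of Q \<and> F \<noteq> P \<longrightarrow> convex_polyiamond F))"

end

theory Submission
  imports Defs
begin

text \<open>
  A convex polyiamond \<open>P\<close> is a lattice hexagon. Take one of its triangles as a frame
  \<open>u, w\<close> of a triangular lattice. Removing the finitely many vertices leaves \<open>P\<close> connected,
  and across every edge shared by two glued triangles the lattice propagates, so all
  vertices are lattice points. Each edge of \<open>P\<close> contains an edge of some triangle, hence is
  parallel to \<open>u\<close>, \<open>w\<close> or \<open>u - w\<close>; so \<open>P\<close> is cut out by
  \<open>a1 \<le> X \<le> a2, b1 \<le> Y \<le> b2, c1 \<le> X + Y \<le> c2\<close> with integer bounds attained at vertices.
  Conversely every 2-dimensional lattice hexagon is the union of the lattice triangles in it.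

  To dome \<open>P\<close>, complete \<open>u, w\<close> to edges \<open>f1, f2, f3\<close> of a regular tetrahedron with
  \<open>f1 - f3 = u\<close>, \<open>f2 - f3 = w\<close>, and map the truncated box
  \<open>a1 \<le> x1 \<le> a2, b1 \<le> x2 \<le> b2, -c2 \<le> x3 \<le> -c1, x1 + x2 + x3 \<le> 0\<close>
  by \<open>x \<mapsto> p0 + x1 f1 + x2 f2 + x3 f3\<close>. The face \<open>x1 + x2 + x3 = 0\<close> goes onto \<open>P\<close>, and
  every other facet onto a lattice hexagon in the plane of two of the \<open>fi\<close>, which is again
  a convex polyiamond.
\<close>

text \<open>Degenerate hexagons, with fewer than six sides or empty, are included.\<close>
definition hexagon ::
    "real^3 \<Rightarrow> real^3 \<Rightarrow> real^3 \<Rightarrow> int \<Rightarrow> int \<Rightarrow> int \<Rightarrow> int \<Rightarrow> int \<Rightarrow> int \<Rightarrow> (real^3) set" where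
  "hexagon q f g a1 a2 b1 b2 c1 c2 =
     {q + x *\<^sub>R f + y *\<^sub>R g | x y. of_int a1 \<le> x \<and> x \<le> of_int a2 \<and> of_int b1 \<le> y \<and> y \<le> of_int b2
        \<and> of_int c1 \<le> x + y \<and> x + y \<le> of_int c2}"

definition vertices :: "'a::real_vector set \<Rightarrow> 'a set" where
  "vertices S = {x. x extreme_point_of S}"

definition edge_to_edge :: "'a::real_vector set set \<Rightarrow> bool" where
  "edge_to_edge T \<longleftrightarrow> (\<forall>t1\<in>T. \<forall>t2\<in>T. t1 \<noteq> t2 \<longrightarrow> t1 \<inter> t2 face_of t1 \<and> t1 \<inter> t2 face_of t2)"

lemma polyiamond_iff:
  "polyiamond P \<longleftrightarrow> aff_dim P = 2 \<and>
     (\<exists>T. finite T \<and> T \<noteq> {} \<and> (\<forall>t\<in>T. unit_triangle t) \<and> P = \<Union>T \<and> edge_to_edge T)"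
  by (simp add: polyiamond_def edge_to_edge_def)

section \<open>Unit triangles\<close>

lemma unit_triangle_affine_independent:
  fixes a b c :: "'a::euclidean_space"
  assumes "dist a b = 1" "dist b c = 1" "dist a c = 1"
  shows "\<not> affine_dependent {a, b, c}"
proof
  assume "affine_dependent {a, b, c}"
  then have "collinear {a, b, c}" using collinear_3_eq_affine_dependent by blast
  then have "collinear {0, a - b, c - b}" by (simp add: collinear_3)
  moreover have "a - b \<noteq> 0" "c - b \<noteq> 0" using assms by (auto simp: dist_norm)
  ultimately obtain k where k: "c - b = k *\<^sub>R (a - b)" using collinear_lemma by blast
  have ab: "norm (a - b) = 1" using assms by (simp add: dist_norm)
  have "norm (c - b) = 1" using assms by (simp add: dist_norm norm_minus_commute)
  then have "\<bar>k\<bar> = 1" using k ab by simp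
  moreover have "\<bar>k - 1\<bar> = 1"
  proof -
    have "c - a = (k - 1) *\<^sub>R (a - b)" using k by (simp add: algebra_simps)
    moreover have "norm (c - a) = 1" using assms(3) by (simp add: dist_norm norm_minus_commute)
    ultimately show ?thesis using ab by simp
  qed
  ultimately show False by linarith
qed

lemma unit_triangleE:
  assumes "unit_triangle t"
  obtains a b c where "t = convex hull {a, b, c}" "dist a b = 1" "dist b c = 1" "dist a c = 1"
    "\<not> affine_dependent {a, b, c}" "vertices t = {a, b, c}"
proof -
  obtain a b c where abc: "t = convex hull {a, b, c}" "dist a b = 1" "dist b c = 1" "dist a c = 1"
    using assms unfolding unit_triangle_def by blast
  then have ind: "\<not> affine_dependent {a, b, c}" by (intro unit_triangle_affine_independent)
  then have "vertices t = {a, b, c}"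
    using extreme_point_of_convex_hull_affine_independent[OF ind] abc(1) by (auto simp: vertices_def)
  with abc ind show thesis by (rule that)
qed

lemma unit_triangle_dist_vertices:
  assumes "dist a b = 1" "dist b c = 1" "dist a c = 1" "x \<in> {a, b, c}" "y \<in> {a, b, c}" "x \<noteq> y"
  shows "dist x y = 1"
  using assms by (auto simp: dist_commute)

lemma vertices_subset: "vertices S \<subseteq> S"
  by (auto simp: vertices_def extreme_point_of_def)

lemma finite_vertices_unit_triangle: "unit_triangle t \<Longrightarrow> finite (vertices t)"
  by (erule unit_triangleE) simp

lemma infinite_unit_triangle:
  assumes "unit_triangle t"
  shows "infinite t"
proof
  assume fin: "finite t"
  obtain a b c where t: "t = convex hull {a, b, c}" "dist a b = 1" using assms unfolding unit_triangle_def by blast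
  have "closed_segment a b \<subseteq> t"
    unfolding t(1) segment_convex_hull by (rule hull_mono) auto
  with fin have "finite (closed_segment a b)" by (rule finite_subset[rotated])
  with t(2) show False by auto
qed

lemma compact_unit_triangle: "unit_triangle t \<Longrightarrow> compact t"
  unfolding unit_triangle_def by (auto simp: finite_imp_compact_convex_hull)

lemma convex_Union_unit_triangles:
  assumes "convex P" "P = \<Union>T" "\<forall>t\<in>T. unit_triangle t"
  shows "P = convex hull (\<Union>(vertices ` T))"
proof
  show "P \<subseteq> convex hull (\<Union>(vertices ` T))"
  proof
    fix p assume "p \<in> P"
    with assms(2) obtain t where t: "t \<in> T" "p \<in> t" by blast
    with assms(3) obtain a b c where "t = convex hull {a, b, c}" "vertices t = {a, b, c}"
      by (metis unit_triangleE)
    then have "t = convex hull (vertices t)" by simp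
    also have "\<dots> \<subseteq> convex hull (\<Union>(vertices ` T))" using t(1) by (intro hull_mono) auto
    finally show "p \<in> convex hull (\<Union>(vertices ` T))" using t(2) by blast
  qed
  have "\<Union>(vertices ` T) \<subseteq> P" using assms(2) vertices_subset by blast
  then show "convex hull (\<Union>(vertices ` T)) \<subseteq> P" using assms(1) by (rule hull_minimal)
qed

text \<open>A face of a simplex is the hull of a subset of its vertices.\<close>
lemma face_of_simplex_two_vertices:
  fixes S :: "'a::euclidean_space set"
  assumes "\<not> affine_dependent S" "F face_of convex hull S" "\<not> F \<subseteq> S"
  obtains v1 v2 where "v1 \<in> S" "v2 \<in> S" "v1 \<noteq> v2" "v1 \<in> vertices F" "v2 \<in> vertices F"
proof -
  obtain C where C: "C \<subseteq> S" "F = convex hull C"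
    using face_of_convex_hull_affine_independent assms(1,2) by blast
  have indC: "\<not> affine_dependent C" using affine_independent_subset assms(1) C(1) by blast
  have "\<not> (\<forall>v1\<in>C. \<forall>v2\<in>C. v1 = v2)"
  proof
    assume "\<forall>v1\<in>C. \<forall>v2\<in>C. v1 = v2"
    then have "C = {} \<or> (\<exists>v. C = {v})" by blast
    then have "F = C" using C(2) by auto
    with C(1) assms(3) show False by blast
  qed
  then obtain v1 v2 where "v1 \<in> C" "v2 \<in> C" "v1 \<noteq> v2" by blast
  then show thesis
    using that[of v1 v2] C extreme_point_of_convex_hull_affine_independent[OF indC]
    by (auto simp: vertices_def)
qed

text \<open>In coordinates along two sides of an equilateral triangle, the third vertex
  is the edge vector \<open>(I, J)\<close> rotated by \<open>\<plusminus>60\<close> degrees.\<close>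
lemma equilateral_third_vertex:
  fixes I J \<alpha> \<beta> :: real
  assumes "I\<^sup>2 + I * J + J\<^sup>2 = 1" "\<alpha>\<^sup>2 + \<alpha> * \<beta> + \<beta>\<^sup>2 = 1"
    and "(\<alpha> - I)\<^sup>2 + (\<alpha> - I) * (\<beta> - J) + (\<beta> - J)\<^sup>2 = 1"
  shows "(\<alpha> = - J \<and> \<beta> = I + J) \<or> (\<alpha> = I + J \<and> \<beta> = - I)"
proof -
  define E where "E = 2 * \<alpha> * I + \<alpha> * J + \<beta> * I + 2 * \<beta> * J"
  define D where "D = \<alpha> * J - \<beta> * I"
  have E: "E = 1" using assms by (simp add: E_def power2_eq_square algebra_simps)
  have "E\<^sup>2 + 3 * D\<^sup>2 = 4 * (\<alpha>\<^sup>2 + \<alpha> * \<beta> + \<beta>\<^sup>2) * (I\<^sup>2 + I * J + J\<^sup>2)"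
    by (simp add: E_def D_def power2_eq_square algebra_simps)
  with assms E have "D\<^sup>2 = 1" by simp
  then have "D = 1 \<or> D = -1" by (simp add: power2_eq_1_iff)
  moreover have "2 * \<alpha> * (I\<^sup>2 + I * J + J\<^sup>2) = I * E + (I + 2 * J) * D"
    "2 * \<beta> * (I\<^sup>2 + I * J + J\<^sup>2) = J * E - (2 * I + J) * D"
    by (simp_all add: E_def D_def power2_eq_square algebra_simps)
  ultimately show ?thesis using E assms(1) by auto
qed

lemma int_norm_eq_1_cases:
  fixes I J :: int
  assumes "(of_int I)\<^sup>2 + of_int I * of_int J + (of_int J)\<^sup>2 = (1::real)"
  shows "(J = 0 \<and> I \<noteq> 0) \<or> (I = 0 \<and> J \<noteq> 0) \<or> (I = - J \<and> I \<noteq> 0)"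
proof -
  have norm: "I\<^sup>2 + I * J + J\<^sup>2 = 1"
    using assms by (metis of_int_add of_int_eq_1_iff of_int_mult of_int_power)
  then have "(2 * I + J)\<^sup>2 + 3 * J\<^sup>2 = 4" "(2 * J + I)\<^sup>2 + 3 * I\<^sup>2 = 4"
    by (simp_all add: power2_eq_square algebra_simps)
  then have "I\<^sup>2 \<le> 1" "J\<^sup>2 \<le> 1" by (smt (verit) zero_le_power2)+
  then have "\<bar>I\<bar> \<le> 1" "\<bar>J\<bar> \<le> 1" by (simp_all add: abs_square_le_1)
  then have "I \<in> {-1, 0, 1}" "J \<in> {-1, 0, 1}" by auto
  with norm show ?thesis by (auto simp: power2_eq_square)
qed

section \<open>Faces cut out by hyperplanes\<close>

lemma rel_interior_strict_le:
  fixes S :: "'a::euclidean_space set"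
  assumes "convex S" "\<And>x. x \<in> S \<Longrightarrow> g \<bullet> x \<le> b" "\<not> S \<subseteq> {x. g \<bullet> x = b}" "p \<in> rel_interior S"
  shows "g \<bullet> p < b"
proof -
  have face: "(S \<inter> {x. g \<bullet> x = b}) face_of S"
    using assms(1,2) by (rule face_of_Int_supporting_hyperplane_le)
  have "g \<bullet> p \<noteq> b"
  proof
    assume "g \<bullet> p = b"
    then have "(S \<inter> {x. g \<bullet> x = b}) \<inter> rel_interior S \<noteq> {}"
      using assms(4) rel_interior_subset by blast
    then have "S \<subseteq> S \<inter> {x. g \<bullet> x = b}" using subset_of_face_of[OF face] by blast
    with assms(3) show False by blast
  qed
  moreover have "g \<bullet> p \<le> b" using assms(2,4) rel_interior_subset by blast
  ultimately show ?thesis by simp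
qed

lemma slab_face:
  fixes g :: "'a::euclidean_space" and m m' :: int
  assumes "convex C" and slab: "\<And>p. p \<in> C \<Longrightarrow> of_int m \<le> g \<bullet> p - h \<and> g \<bullet> p - h \<le> of_int m + 1"
  shows "C \<inter> {p. of_int m' \<le> g \<bullet> p - h \<and> g \<bullet> p - h \<le> of_int m' + 1} face_of C"
proof -
  consider "m' = m" | "m' = m + 1" | "m' = m - 1" | "m' \<ge> m + 2 \<or> m' \<le> m - 2" by linarith
  then show ?thesis
  proof cases
    case 1
    with slab have "C \<inter> {p. of_int m' \<le> g \<bullet> p - h \<and> g \<bullet> p - h \<le> of_int m' + 1} = C" by auto
    with assms(1) show ?thesis by (simp add: face_of_refl)
  next
    case 2
    with slab have "C \<inter> {p. of_int m' \<le> g \<bullet> p - h \<and> g \<bullet> p - h \<le> of_int m' + 1}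
        = C \<inter> {p. g \<bullet> p = of_int m + 1 + h}" by force
    moreover have "(C \<inter> {p. g \<bullet> p = of_int m + 1 + h}) face_of C"
      using assms(1) by (rule face_of_Int_supporting_hyperplane_le) (use slab in force)
    ultimately show ?thesis by simp
  next
    case 3
    with slab have "C \<inter> {p. of_int m' \<le> g \<bullet> p - h \<and> g \<bullet> p - h \<le> of_int m' + 1}
        = C \<inter> {p. g \<bullet> p = of_int m + h}" by force
    moreover have "(C \<inter> {p. g \<bullet> p = of_int m + h}) face_of C"
      using assms(1) by (rule face_of_Int_supporting_hyperplane_ge) (use slab in force)
    ultimately show ?thesis by simp
  next
    case 4
    then have "real_of_int m' \<ge> of_int m + 2 \<or> real_of_int m' \<le> of_int m - 2" by linarith
    with slab have "C \<inter> {p. of_int m' \<le> g \<bullet> p - h \<and> g \<bullet> p - h \<le> of_int m' + 1} = {}" by force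
    then show ?thesis by simp
  qed
qed

lemma interior_halfspaces_Inter:
  fixes z :: "'a::euclidean_space"
  assumes "finite C" "\<And>a b. (a, b) \<in> C \<Longrightarrow> a \<bullet> z < b"
  shows "z \<in> interior {x. \<forall>(a, b)\<in>C. a \<bullet> x \<le> b}"
proof -
  have "{x. \<forall>(a, b)\<in>C. a \<bullet> x < b} = (\<Inter>c\<in>C. {x. fst c \<bullet> x < snd c})"
    by (auto simp: case_prod_unfold)
  then have "open {x. \<forall>(a, b)\<in>C. a \<bullet> x < b}" using assms(1) by (simp add: open_INT open_halfspace_lt)
  moreover have "{x. \<forall>(a, b)\<in>C. a \<bullet> x < b} \<subseteq> {x. \<forall>(a, b)\<in>C. a \<bullet> x \<le> b}" by auto
  ultimately have "{x. \<forall>(a, b)\<in>C. a \<bullet> x < b} \<subseteq> interior {x. \<forall>(a, b)\<in>C. a \<bullet> x \<le> b}"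
    by (simp add: interior_maximal)
  with assms(2) show ?thesis by blast
qed

text \<open>Some constraint is tight at a relative interior point of the facet, which therefore lies in
  the face cut out by that constraint; both have codimension one, so they coincide.\<close>
lemma facet_of_halfspaces_Inter:
  fixes S :: "'a::euclidean_space set"
  assumes S: "S = {x. \<forall>(a, b)\<in>C. a \<bullet> x \<le> b}" and C: "finite C" "\<And>a b. (a, b) \<in> C \<Longrightarrow> a \<noteq> 0"
    and "interior S \<noteq> {}" "F facet_of S"
  obtains a b where "(a, b) \<in> C" "F = S \<inter> {x. a \<bullet> x = b}"
proof -
  have "S = (\<Inter>c\<in>C. {x. fst c \<bullet> x \<le> snd c})" using S by (auto simp: case_prod_unfold)
  then have "convex S" by (simp add: convex_INT convex_halfspace_le)
  have dim: "aff_dim S = DIM('a)" using aff_dim_nonempty_interior assms(4) by blast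
  have F: "F face_of S" "F \<noteq> {}" "aff_dim F = DIM('a) - 1" using assms(5) dim by (auto simp: facet_of_def)
  then have "F \<noteq> S" using dim by auto
  obtain z where z: "z \<in> rel_interior F" using F rel_interior_eq_empty face_of_imp_convex by blast
  then have "z \<in> F" "z \<in> S" using rel_interior_subset face_of_imp_subset F(1) by blast+
  have "z \<notin> interior S" using face_of_disjoint_interior[OF F(1) \<open>F \<noteq> S\<close>] \<open>z \<in> F\<close> by blast
  then obtain a b where ab: "(a, b) \<in> C" "a \<bullet> z = b"
    using interior_halfspaces_Inter[OF C(1), of z] \<open>z \<in> S\<close> S by fastforce
  let ?H = "S \<inter> {x. a \<bullet> x = b}"
  have H: "?H face_of S"
    using \<open>convex S\<close> by (rule face_of_Int_supporting_hyperplane_le) (use S ab(1) in auto)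
  have "F \<subseteq> ?H"
    using subset_of_face_of[OF H face_of_imp_subset[OF F(1)]] z ab(2) \<open>z \<in> S\<close> by blast
  have "?H \<noteq> S"
  proof
    assume "?H = S"
    then have "aff_dim S \<le> aff_dim {x. a \<bullet> x = b}" by (metis aff_dim_subset inf.cobounded2)
    with dim C(2)[OF ab(1)] show False by simp
  qed
  then have "aff_dim ?H < DIM('a)" using face_of_aff_dim_lt[OF \<open>convex S\<close> H] dim by simp
  have "F = ?H"
  proof (rule ccontr)
    assume "F \<noteq> ?H"
    moreover have "F face_of ?H" using face_of_subset[OF F(1) \<open>F \<subseteq> ?H\<close>] by blast
    ultimately have "aff_dim F < aff_dim ?H" using face_of_aff_dim_lt[OF face_of_imp_convex[OF H]] by blast
    with F(3) \<open>aff_dim ?H < DIM('a)\<close> show False by simp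
  qed
  with ab(1) show thesis by (rule that)
qed

lemma polyhedron_facet_halfspaces:
  fixes P :: "'a::euclidean_space set"
  assumes "polyhedron P" "z \<in> affine hull P"
    and "\<And>g b. P \<subseteq> {x. g \<bullet> x \<le> b} \<Longrightarrow> (P \<inter> {x. g \<bullet> x = b}) facet_of P \<Longrightarrow> g \<bullet> z \<le> b"
  shows "z \<in> P"
proof -
  obtain F where F: "finite F" "P = affine hull P \<inter> \<Inter>F" "\<forall>h\<in>F. \<exists>a b. a \<noteq> 0 \<and> h = {x. a \<bullet> x \<le> b}"
    "\<forall>F'. F' \<subset> F \<longrightarrow> P \<subset> affine hull P \<inter> \<Inter>F'"
    using assms(1) unfolding polyhedron_Int_affine_minimal by blast
  then obtain a b where ab: "\<And>h. h \<in> F \<Longrightarrow> a h \<noteq> 0 \<and> h = {x. a h \<bullet> x \<le> b h}" by metis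
  have "z \<in> h" if "h \<in> F" for h
  proof -
    have "P \<subseteq> {x. a h \<bullet> x \<le> b h}" using F(2) ab that by blast
    moreover have "(P \<inter> {x. a h \<bullet> x = b h}) facet_of P"
      using facet_of_polyhedron_explicit[OF F(1,2) ab] F(4) that by blast
    ultimately have "a h \<bullet> z \<le> b h" by (rule assms(3))
    with ab that show ?thesis by blast
  qed
  with F(2) assms(2) show ?thesis by blast
qed

lemma aff_dim_injective_affine_image:
  assumes "linear M" "inj M"
  shows "aff_dim ((\<lambda>x. p + M x) ` S) = aff_dim S"
  using assms by (simp add: image_image[of "(+) p" M, symmetric, unfolded comp_def] aff_dim_translation_eq)

lemma facet_of_injective_affine_image:
  assumes "linear M" "inj M"
  shows "(\<lambda>x. p + M x) ` G facet_of (\<lambda>x. p + M x) ` S \<longleftrightarrow> G facet_of S"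
proof -
  have img: "(\<lambda>x. p + M x) ` A = (+) p ` M ` A" for A by (simp add: image_image)
  show ?thesis
    unfolding img facet_of_def face_of_translation_eq face_of_linear_image[OF assms]
      aff_dim_translation_eq aff_dim_injective_linear_image[OF assms] by simp
qed

section \<open>Triangular lattices\<close>

lemma affine_le_between:
  fixes d k s t r b :: real
  assumes "d + k * s \<le> b" "d + k * t \<le> b" "s \<le> r" "r \<le> t"
  shows "d + k * r \<le> b"
proof (cases "k \<ge> 0")
  case True
  then have "k * r \<le> k * t" using assms by (intro mult_left_mono) auto
  then show ?thesis using assms by linarith
next
  case False
  then have "k * r \<le> k * s" using assms by (intro mult_left_mono_neg) auto
  then show ?thesis using assms by linarith
qed

lemma finite_Ints_bounds:
  fixes f :: "'a \<Rightarrow> real"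
  assumes "finite V" "V \<noteq> {}" "\<And>v. v \<in> V \<Longrightarrow> f v \<in> \<int>"
  obtains m M :: int where "of_int m \<in> f ` V" "of_int M \<in> f ` V"
    "\<And>v. v \<in> V \<Longrightarrow> of_int m \<le> f v \<and> f v \<le> of_int M"
proof -
  have "Min (f ` V) \<in> f ` V" "Max (f ` V) \<in> f ` V" using assms(1,2) by simp_all
  moreover obtain m M where "Min (f ` V) = of_int m" "Max (f ` V) = of_int M"
    using calculation assms(3) by (metis Ints_cases imageE)
  moreover have "Min (f ` V) \<le> f v \<and> f v \<le> Max (f ` V)" if "v \<in> V" for v
    using assms(1) that by simp
  ultimately show thesis using that by metis
qed

locale triangular_frame =
  fixes p0 u w :: "real^3"
  assumes inner_u_u: "u \<bullet> u = 1" and inner_w_w: "w \<bullet> w = 1" and inner_u_w: "u \<bullet> w = 1/2"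
begin

lemma inner_w_u: "w \<bullet> u = 1/2"
  using inner_u_w by (simp add: inner_commute)

definition pt :: "real \<Rightarrow> real \<Rightarrow> real^3" where
  "pt x y = p0 + x *\<^sub>R u + y *\<^sub>R w"

definition dual_u :: "real^3" where "dual_u = (4/3) *\<^sub>R u - (2/3) *\<^sub>R w"

definition dual_w :: "real^3" where "dual_w = (4/3) *\<^sub>R w - (2/3) *\<^sub>R u"

lemma inner_dual [simp]: "dual_u \<bullet> u = 1" "dual_u \<bullet> w = 0" "dual_w \<bullet> u = 0" "dual_w \<bullet> w = 1"
  by (simp_all add: dual_u_def dual_w_def inner_diff_left inner_u_u inner_w_w inner_u_w inner_w_u)

definition X :: "real^3 \<Rightarrow> real" where "X p = dual_u \<bullet> (p - p0)"

definition Y :: "real^3 \<Rightarrow> real" where "Y p = dual_w \<bullet> (p - p0)"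

definition Z :: "real^3 \<Rightarrow> real" where "Z p = X p + Y p"

definition plane :: "(real^3) set" where "plane = {pt x y | x y. True}"

definition lattice :: "(real^3) set" where "lattice = {pt (of_int i) (of_int j) | i j. True}"

lemma inner_pt: "g \<bullet> pt x y = g \<bullet> p0 + x * (g \<bullet> u) + y * (g \<bullet> w)"
  by (simp add: pt_def inner_add_right)

lemma X_pt [simp]: "X (pt x y) = x" and Y_pt [simp]: "Y (pt x y) = y" and Z_pt [simp]: "Z (pt x y) = x + y"
  by (simp_all add: X_def Y_def Z_def pt_def inner_add_right)

lemma X_inner: "X p = dual_u \<bullet> p - dual_u \<bullet> p0"
  and Y_inner: "Y p = dual_w \<bullet> p - dual_w \<bullet> p0"
  and Z_inner: "Z p = (dual_u + dual_w) \<bullet> p - (dual_u + dual_w) \<bullet> p0"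
  by (simp_all add: X_def Y_def Z_def inner_diff_right inner_add_left)

lemma pt_in_plane [simp]: "pt x y \<in> plane"
  by (auto simp: plane_def)

lemma lattice_subset_plane: "lattice \<subseteq> plane"
  by (auto simp: lattice_def)

lemma pt_in_lattice: "x \<in> \<int> \<Longrightarrow> y \<in> \<int> \<Longrightarrow> pt x y \<in> lattice"
  by (auto simp: lattice_def elim!: Ints_cases)

lemma lattice_Ints: "v \<in> lattice \<Longrightarrow> X v \<in> \<int> \<and> Y v \<in> \<int> \<and> Z v \<in> \<int>"
  by (auto simp: lattice_def)

lemma pt_X_Y: "p \<in> plane \<Longrightarrow> pt (X p) (Y p) = p"
  by (auto simp: plane_def)

lemma pt_affine_combination:
  assumes "\<alpha> + \<beta> + \<gamma> = 1"
  shows "\<alpha> *\<^sub>R pt x1 y1 + \<beta> *\<^sub>R pt x2 y2 + \<gamma> *\<^sub>R pt x3 y3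
     = pt (\<alpha> * x1 + \<beta> * x2 + \<gamma> * x3) (\<alpha> * y1 + \<beta> * y2 + \<gamma> * y3)"
proof -
  have "\<alpha> *\<^sub>R pt x1 y1 + \<beta> *\<^sub>R pt x2 y2 + \<gamma> *\<^sub>R pt x3 y3 =
      (\<alpha> + \<beta> + \<gamma>) *\<^sub>R p0 + (\<alpha> * x1 + \<beta> * x2 + \<gamma> * x3) *\<^sub>R u + (\<alpha> * y1 + \<beta> * y2 + \<gamma> * y3) *\<^sub>R w"
    by (simp add: pt_def algebra_simps)
  with assms show ?thesis by (simp add: pt_def)
qed

lemma dist_pt:
  "(dist (pt x y) (pt x' y'))\<^sup>2 = (x - x')\<^sup>2 + (x - x') * (y - y') + (y - y')\<^sup>2"
proof -
  have "pt x y - pt x' y' = (x - x') *\<^sub>R u + (y - y') *\<^sub>R w" by (simp add: pt_def algebra_simps)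
  moreover have "(a *\<^sub>R u + b *\<^sub>R w) \<bullet> (a *\<^sub>R u + b *\<^sub>R w) = a\<^sup>2 + a * b + b\<^sup>2" for a b
    by (simp add: inner_add_left inner_add_right inner_u_u inner_w_w inner_u_w inner_w_u
        power2_eq_square algebra_simps)
  ultimately show ?thesis by (simp add: dist_norm power2_norm_eq_inner)
qed

lemma dist_pt_eq_1:
  "(x - x')\<^sup>2 + (x - x') * (y - y') + (y - y')\<^sup>2 = 1 \<Longrightarrow> dist (pt x y) (pt x' y') = 1"
  using dist_pt[of x y x' y'] zero_le_dist[of "pt x y" "pt x' y'"] by (auto simp: power2_eq_1_iff)

lemma plane_eq_affine_hull: "plane = affine hull {pt 0 0, pt 1 0, pt 0 1}"
proof
  show "plane \<subseteq> affine hull {pt 0 0, pt 1 0, pt 0 1}"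
  proof
    fix p assume "p \<in> plane"
    then obtain x y where p: "p = pt x y" by (auto simp: plane_def)
    have "p = (1 - x - y) *\<^sub>R pt 0 0 + x *\<^sub>R pt 1 0 + y *\<^sub>R pt 0 1"
      unfolding p by (subst pt_affine_combination) simp_all
    then show "p \<in> affine hull {pt 0 0, pt 1 0, pt 0 1}"
      unfolding affine_hull_3 by (intro CollectI exI[of _ "1 - x - y"] exI[of _ x] exI[of _ y]) simp
  qed
  show "affine hull {pt 0 0, pt 1 0, pt 0 1} \<subseteq> plane"
    by (auto simp: affine_hull_3 pt_affine_combination)
qed

lemma affine_plane: "affine plane"
  by (simp add: plane_eq_affine_hull)

lemma closed_plane: "closed plane"
  by (simp add: plane_eq_affine_hull closed_affine_hull)

lemma aff_dim_plane: "aff_dim plane = 2"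
proof -
  have ind: "\<not> affine_dependent {pt 0 0, pt 1 0, pt 0 1}"
    by (intro unit_triangle_affine_independent dist_pt_eq_1) simp_all
  have "pt 0 0 \<noteq> pt 1 0" "pt 0 0 \<noteq> pt 0 1" "pt 1 0 \<noteq> pt 0 1"
    by (metis X_pt Y_pt zero_neq_one)+
  then have "card {pt 0 0, pt 1 0, pt 0 1} = 3" by simp
  with aff_dim_affine_independent[OF ind] show ?thesis
    by (simp add: plane_eq_affine_hull)
qed

lemma aff_dim_plane_Int_hyperplane:
  assumes "g \<bullet> u \<noteq> 0 \<or> g \<bullet> w \<noteq> 0"
  shows "aff_dim (plane \<inter> {p. g \<bullet> p = b}) \<le> 1"
proof -
  have "\<not> plane \<subseteq> {p. g \<bullet> p = b}"
  proof
    assume "plane \<subseteq> {p. g \<bullet> p = b}"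
    then have "g \<bullet> pt x y = b" for x y using pt_in_plane by blast
    from this[of 0 0] this[of 1 0] this[of 0 1] assms show False by (simp add: inner_pt)
  qed
  then show ?thesis
    using aff_dim_affine_Int_hyperplane[OF affine_plane, of g b] aff_dim_plane by auto
qed

lemma rel_interior_strict_level:
  assumes "convex S" "aff_dim S = 2" "S \<subseteq> plane" "p \<in> rel_interior S"
    and "g \<bullet> u \<noteq> 0 \<or> g \<bullet> w \<noteq> 0" "\<And>q. q \<in> S \<Longrightarrow> g \<bullet> q \<le> b"
  shows "g \<bullet> p < b"
proof (rule rel_interior_strict_le[OF assms(1,6) _ assms(4)])
  show "\<not> S \<subseteq> {x. g \<bullet> x = b}"
  proof
    assume "S \<subseteq> {x. g \<bullet> x = b}"
    with assms(3) have "aff_dim S \<le> aff_dim (plane \<inter> {x. g \<bullet> x = b})" by (intro aff_dim_subset) auto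
    with aff_dim_plane_Int_hyperplane[OF assms(5), of b] assms(2) show False by simp
  qed
qed

lemma hexagon_eq:
  "hexagon p0 u w a1 a2 b1 b2 c1 c2 = {p \<in> plane. of_int a1 \<le> X p \<and> X p \<le> of_int a2
     \<and> of_int b1 \<le> Y p \<and> Y p \<le> of_int b2 \<and> of_int c1 \<le> Z p \<and> Z p \<le> of_int c2}"
  (is "?H = ?R")
proof
  show "?H \<subseteq> ?R" by (auto simp: hexagon_def simp flip: pt_def)
  show "?R \<subseteq> ?H"
  proof
    fix p assume p: "p \<in> ?R"
    then have "p = p0 + X p *\<^sub>R u + Y p *\<^sub>R w" using pt_X_Y by (simp add: pt_def)
    with p show "p \<in> ?H" unfolding hexagon_def Z_def by blast
  qed
qed

lemma hexagon_Int_halfspaces: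
  "hexagon p0 u w a1 a2 b1 b2 c1 c2 = plane
     \<inter> {p. dual_u \<bullet> p \<ge> of_int a1 + dual_u \<bullet> p0} \<inter> {p. dual_u \<bullet> p \<le> of_int a2 + dual_u \<bullet> p0}
     \<inter> {p. dual_w \<bullet> p \<ge> of_int b1 + dual_w \<bullet> p0} \<inter> {p. dual_w \<bullet> p \<le> of_int b2 + dual_w \<bullet> p0}
     \<inter> {p. (dual_u + dual_w) \<bullet> p \<ge> of_int c1 + (dual_u + dual_w) \<bullet> p0}
     \<inter> {p. (dual_u + dual_w) \<bullet> p \<le> of_int c2 + (dual_u + dual_w) \<bullet> p0}"
  unfolding hexagon_eq X_inner Y_inner Z_inner by auto

lemma convex_hexagon: "convex (hexagon p0 u w a1 a2 b1 b2 c1 c2)"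
  unfolding hexagon_Int_halfspaces
  by (intro convex_Int affine_imp_convex affine_plane convex_halfspace_le convex_halfspace_ge)

lemma closed_hexagon: "closed (hexagon p0 u w a1 a2 b1 b2 c1 c2)"
  unfolding hexagon_Int_halfspaces
  by (intro closed_Int closed_plane closed_halfspace_le closed_halfspace_ge)

lemma rel_interior_hexagon:
  assumes "aff_dim (hexagon p0 u w a1 a2 b1 b2 c1 c2) = 2"
    and "p \<in> rel_interior (hexagon p0 u w a1 a2 b1 b2 c1 c2)"
  shows "of_int a1 < X p \<and> X p < of_int a2 \<and> of_int b1 < Y p \<and> Y p < of_int b2
    \<and> of_int c1 < Z p \<and> Z p < of_int c2"
proof -
  let ?H = "hexagon p0 u w a1 a2 b1 b2 c1 c2"
  have "?H \<subseteq> plane" by (auto simp: hexagon_eq)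
  note strict = rel_interior_strict_level[OF convex_hexagon assms(1) this assms(2)]
  have "(- dual_u) \<bullet> p < - of_int a1 - dual_u \<bullet> p0" "dual_u \<bullet> p < of_int a2 + dual_u \<bullet> p0"
    "(- dual_w) \<bullet> p < - of_int b1 - dual_w \<bullet> p0" "dual_w \<bullet> p < of_int b2 + dual_w \<bullet> p0"
    "(- (dual_u + dual_w)) \<bullet> p < - of_int c1 - (dual_u + dual_w) \<bullet> p0"
    "(dual_u + dual_w) \<bullet> p < of_int c2 + (dual_u + dual_w) \<bullet> p0"
    by (rule strict; force simp: hexagon_eq X_inner Y_inner Z_inner inner_add_left inner_diff_left)+
  then show ?thesis by (simp add: X_inner Y_inner Z_inner inner_add_left inner_diff_left)
qed

definition cell :: "int \<Rightarrow> int \<Rightarrow> int \<Rightarrow> (real^3) set" where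
  "cell i j k = hexagon p0 u w i (i + 1) j (j + 1) k (k + 1)"

lemma cell_eq:
  "cell i j k = {p \<in> plane. of_int i \<le> X p \<and> X p \<le> of_int i + 1
     \<and> of_int j \<le> Y p \<and> Y p \<le> of_int j + 1 \<and> of_int k \<le> Z p \<and> Z p \<le> of_int k + 1}"
  by (simp add: cell_def hexagon_eq)

lemma convex_cell: "convex (cell i j k)"
  by (simp add: cell_def convex_hexagon)

lemma cell_Int_face: "(cell i j k \<inter> cell i' j' k') face_of cell i j k"
proof -
  let ?C = "cell i j k"
  have "?C \<inter> cell i' j' k' = (?C \<inter> {p. of_int i' \<le> X p \<and> X p \<le> of_int i' + 1})
      \<inter> (?C \<inter> {p. of_int j' \<le> Y p \<and> Y p \<le> of_int j' + 1})
      \<inter> (?C \<inter> {p. of_int k' \<le> Z p \<and> Z p \<le> of_int k' + 1})"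
    by (auto simp: cell_eq)
  moreover have "(?C \<inter> {p. of_int i' \<le> X p \<and> X p \<le> of_int i' + 1}) face_of ?C"
    unfolding X_inner by (rule slab_face[OF convex_cell]) (auto simp: cell_eq X_inner)
  moreover have "(?C \<inter> {p. of_int j' \<le> Y p \<and> Y p \<le> of_int j' + 1}) face_of ?C"
    unfolding Y_inner by (rule slab_face[OF convex_cell]) (auto simp: cell_eq Y_inner)
  moreover have "(?C \<inter> {p. of_int k' \<le> Z p \<and> Z p \<le> of_int k' + 1}) face_of ?C"
    unfolding Z_inner by (rule slab_face[OF convex_cell]) (auto simp: cell_eq Z_inner)
  ultimately show ?thesis by (simp add: face_of_Int)
qed

lemma cell_up: "cell i j (i + j) = convex hull {pt i j, pt (i + 1) j, pt i (j + 1)}"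
proof
  show "cell i j (i + j) \<subseteq> convex hull {pt i j, pt (i + 1) j, pt i (j + 1)}"
  proof
    fix p assume p: "p \<in> cell i j (i + j)"
    define a where "a = X p - i"
    define b where "b = Y p - j"
    have ab: "0 \<le> a" "0 \<le> b" "a + b \<le> 1" using p by (auto simp: cell_eq a_def b_def Z_def)
    have "p = pt (X p) (Y p)" using p pt_X_Y by (simp add: cell_eq)
    also have "\<dots> = (1 - a - b) *\<^sub>R pt i j + a *\<^sub>R pt (i + 1) j + b *\<^sub>R pt i (j + 1)"
      by (subst pt_affine_combination) (auto simp: a_def b_def algebra_simps)
    finally show "p \<in> convex hull {pt i j, pt (i + 1) j, pt i (j + 1)}"
      unfolding convex_hull_3 using ab
      by (intro CollectI exI[of _ "1 - a - b"] exI[of _ a] exI[of _ b]) simp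
  qed
  show "convex hull {pt i j, pt (i + 1) j, pt i (j + 1)} \<subseteq> cell i j (i + j)"
    by (intro hull_minimal convex_cell) (auto simp: cell_eq)
qed

lemma cell_down: "cell i j (i + j + 1) = convex hull {pt (i + 1) j, pt i (j + 1), pt (i + 1) (j + 1)}"
proof
  show "cell i j (i + j + 1) \<subseteq> convex hull {pt (i + 1) j, pt i (j + 1), pt (i + 1) (j + 1)}"
  proof
    fix p assume p: "p \<in> cell i j (i + j + 1)"
    define a where "a = X p - i"
    define b where "b = Y p - j"
    have ab: "a \<le> 1" "b \<le> 1" "1 \<le> a + b" using p by (auto simp: cell_eq a_def b_def Z_def)
    have "p = pt (X p) (Y p)" using p pt_X_Y by (simp add: cell_eq)
    also have "\<dots> = (1 - b) *\<^sub>R pt (i + 1) j + (1 - a) *\<^sub>R pt i (j + 1) + (a + b - 1) *\<^sub>R pt (i + 1) (j + 1)"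
      by (subst pt_affine_combination) (auto simp: a_def b_def algebra_simps)
    finally show "p \<in> convex hull {pt (i + 1) j, pt i (j + 1), pt (i + 1) (j + 1)}"
      unfolding convex_hull_3 using ab
      by (intro CollectI exI[of _ "1 - b"] exI[of _ "1 - a"] exI[of _ "a + b - 1"]) simp
  qed
  show "convex hull {pt (i + 1) j, pt i (j + 1), pt (i + 1) (j + 1)} \<subseteq> cell i j (i + j + 1)"
    by (intro hull_minimal convex_cell) (auto simp: cell_eq)
qed

lemma unit_triangle_cell:
  assumes "k = i + j \<or> k = i + j + 1"
  shows "unit_triangle (cell i j k)"
  using assms
proof
  assume k: "k = i + j"
  have "dist (pt i j) (pt (i + 1) j) = 1" "dist (pt (i + 1) j) (pt i (j + 1)) = 1"
    "dist (pt i j) (pt i (j + 1)) = 1"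
    by (rule dist_pt_eq_1; simp add: power2_eq_square)+
  then show ?thesis unfolding k unit_triangle_def cell_up by blast
next
  assume k: "k = i + j + 1"
  have "dist (pt (i + 1) j) (pt i (j + 1)) = 1" "dist (pt i (j + 1)) (pt (i + 1) (j + 1)) = 1"
    "dist (pt (i + 1) j) (pt (i + 1) (j + 1)) = 1"
    by (rule dist_pt_eq_1; simp add: power2_eq_square)+
  then show ?thesis unfolding k unit_triangle_def cell_down by blast
qed

definition cells :: "int \<Rightarrow> int \<Rightarrow> int \<Rightarrow> int \<Rightarrow> int \<Rightarrow> int \<Rightarrow> (real^3) set set" where
  "cells a1 a2 b1 b2 c1 c2 = {cell i j k | i j k. (k = i + j \<or> k = i + j + 1)
     \<and> a1 \<le> i \<and> i + 1 \<le> a2 \<and> b1 \<le> j \<and> j + 1 \<le> b2 \<and> c1 \<le> k \<and> k + 1 \<le> c2}"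

lemma finite_cells: "finite (cells a1 a2 b1 b2 c1 c2)"
proof (rule finite_subset)
  show "cells a1 a2 b1 b2 c1 c2 \<subseteq> (\<lambda>(i, j, k). cell i j k) ` ({a1..a2} \<times> {b1..b2} \<times> {c1..c2})"
  proof
    fix t assume "t \<in> cells a1 a2 b1 b2 c1 c2"
    then obtain i j k where "t = cell i j k" "a1 \<le> i" "i + 1 \<le> a2" "b1 \<le> j" "j + 1 \<le> b2"
      "c1 \<le> k" "k + 1 \<le> c2"
      unfolding cells_def by blast
    then show "t \<in> (\<lambda>(i, j, k). cell i j k) ` ({a1..a2} \<times> {b1..b2} \<times> {c1..c2})"
      by (intro image_eqI[of _ _ "(i, j, k)"]) auto
  qed
qed simp

lemma Union_cells_subset: "\<Union>(cells a1 a2 b1 b2 c1 c2) \<subseteq> hexagon p0 u w a1 a2 b1 b2 c1 c2"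
proof
  fix p assume "p \<in> \<Union>(cells a1 a2 b1 b2 c1 c2)"
  then obtain i j k where p: "p \<in> cell i j k" and ijk: "a1 \<le> i" "i + 1 \<le> a2" "b1 \<le> j" "j + 1 \<le> b2"
      "c1 \<le> k" "k + 1 \<le> c2"
    unfolding cells_def by blast
  from ijk have "real_of_int a1 \<le> of_int i" "real_of_int i + 1 \<le> of_int a2"
    "real_of_int b1 \<le> of_int j" "real_of_int j + 1 \<le> of_int b2"
    "real_of_int c1 \<le> of_int k" "real_of_int k + 1 \<le> of_int c2"
    by simp_all
  with p show "p \<in> hexagon p0 u w a1 a2 b1 b2 c1 c2"
    unfolding cell_eq hexagon_eq by auto
qed

lemma hexagon_strict_in_cells:
  assumes "p \<in> hexagon p0 u w a1 a2 b1 b2 c1 c2" "X p < of_int a2" "Y p < of_int b2" "Z p < of_int c2"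
  shows "p \<in> \<Union>(cells a1 a2 b1 b2 c1 c2)"
proof -
  define i where "i = \<lfloor>X p\<rfloor>"
  define j where "j = \<lfloor>Y p\<rfloor>"
  define k where "k = (if Z p < of_int (i + j + 1) then i + j else i + j + 1)"
  have p: "p \<in> plane" "of_int a1 \<le> X p" "of_int b1 \<le> Y p" "of_int c1 \<le> Z p"
    using assms(1) by (auto simp: hexagon_eq)
  have X: "of_int i \<le> X p" "X p < of_int i + 1" unfolding i_def by linarith+
  have Y: "of_int j \<le> Y p" "Y p < of_int j + 1" unfolding j_def by linarith+
  have Z: "of_int k \<le> Z p" "Z p \<le> of_int k + 1" "Z p < of_int k + 1"
    using X Y unfolding k_def Z_def by auto
  have "a1 \<le> i" "i + 1 \<le> a2" "b1 \<le> j" "j + 1 \<le> b2"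
    using p assms(2,3) unfolding i_def j_def by (simp_all add: le_floor_iff floor_less_iff add1_zle_eq)
  moreover have "c1 \<le> k" "k + 1 \<le> c2"
    using p(4) Z(1,3) assms(4) by linarith+
  moreover have "p \<in> cell i j k" using p(1) X Y Z by (simp add: cell_eq)
  moreover have "k = i + j \<or> k = i + j + 1" by (simp add: k_def)
  ultimately show ?thesis unfolding cells_def by blast
qed

theorem convex_polyiamond_hexagon:
  assumes "aff_dim (hexagon p0 u w a1 a2 b1 b2 c1 c2) = 2"
  shows "convex_polyiamond (hexagon p0 u w a1 a2 b1 b2 c1 c2)"
proof -
  let ?H = "hexagon p0 u w a1 a2 b1 b2 c1 c2"
  let ?T = "cells a1 a2 b1 b2 c1 c2"
  \<comment> \<open>A boundary point need not lie in the cell indexed by the floors of its coordinates,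
    so it is reached as a limit of relative interior points.\<close>
  have "rel_interior ?H \<subseteq> \<Union>?T"
    using rel_interior_hexagon[OF assms] hexagon_strict_in_cells rel_interior_subset by blast
  moreover have "closed (\<Union>?T)"
    by (intro closed_Union finite_cells) (auto simp: cells_def cell_def closed_hexagon)
  ultimately have "closure (rel_interior ?H) \<subseteq> \<Union>?T" by (rule closure_minimal)
  then have "?H \<subseteq> \<Union>?T"
    by (simp add: convex_closure_rel_interior convex_hexagon closed_hexagon)
  with Union_cells_subset have H: "?H = \<Union>?T" by blast
  have "?H \<noteq> {}" using assms by auto
  with H have nonempty: "?T \<noteq> {}" by auto
  have unit: "\<forall>t\<in>?T. unit_triangle t" unfolding cells_def using unit_triangle_cell by blast
  have edge: "edge_to_edge ?T"
    unfolding edge_to_edge_def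
  proof (intro ballI impI conjI)
    fix t1 t2 assume "t1 \<in> ?T" "t2 \<in> ?T"
    then obtain i j k i' j' k' where "t1 = cell i j k" "t2 = cell i' j' k'"
      unfolding cells_def by blast
    then show "t1 \<inter> t2 face_of t1" "t1 \<inter> t2 face_of t2"
      using cell_Int_face[of i j k i' j' k'] cell_Int_face[of i' j' k' i j k] by (simp_all add: Int_commute)
  qed
  show ?thesis
    unfolding convex_polyiamond_def polyiamond_iff
    by (intro conjI exI[of _ ?T] convex_hexagon assms finite_cells nonempty unit H edge)
qed

end

section \<open>Convex polyiamonds are lattice hexagons\<close>

context triangular_frame
begin

lemma lattice_third_vertex:
  assumes "p \<in> lattice" "q \<in> lattice" "r \<in> plane" "dist p q = 1" "dist r p = 1" "dist r q = 1"
  shows "r \<in> lattice"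
proof -
  obtain i1 j1 where p: "p = pt (of_int i1) (of_int j1)" using assms(1) by (auto simp: lattice_def)
  obtain i2 j2 where q: "q = pt (of_int i2) (of_int j2)" using assms(2) by (auto simp: lattice_def)
  have r: "r = pt (X r) (Y r)" using assms(3) pt_X_Y by simp
  define I J where "I = real_of_int (i2 - i1)" and "J = real_of_int (j2 - j1)"
  have "I\<^sup>2 + I * J + J\<^sup>2 = 1"
    using dist_pt[of i2 j2 i1 j1] assms(4) unfolding p q I_def J_def by (simp add: dist_commute)
  moreover have "(X r - i1)\<^sup>2 + (X r - i1) * (Y r - j1) + (Y r - j1)\<^sup>2 = 1"
    using dist_pt[of "X r" "Y r" i1 j1] assms(5) unfolding p by (simp flip: r)
  moreover have "(X r - i1 - I)\<^sup>2 + (X r - i1 - I) * (Y r - j1 - J) + (Y r - j1 - J)\<^sup>2 = 1"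
    using dist_pt[of "X r" "Y r" i2 j2] assms(6) unfolding q I_def J_def by (simp flip: r)
  ultimately have "(X r = of_int (i1 - (j2 - j1)) \<and> Y r = of_int (j1 + (i2 - i1) + (j2 - j1)))
      \<or> (X r = of_int (i1 + (i2 - i1) + (j2 - j1)) \<and> Y r = of_int (j1 - (i2 - i1)))"
    using equilateral_third_vertex[of I J "X r - i1" "Y r - j1"] unfolding I_def J_def by auto
  then show ?thesis using r unfolding lattice_def by (metis (mono_tags, lifting) mem_Collect_eq)
qed

lemma lattice_edge_direction:
  assumes "v1 \<in> lattice" "v2 \<in> lattice" "dist v1 v2 = 1" "g \<bullet> v1 = g \<bullet> v2"
  shows "g \<bullet> u = 0 \<or> g \<bullet> w = 0 \<or> g \<bullet> u = g \<bullet> w"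
proof -
  obtain i1 j1 where v1: "v1 = pt (of_int i1) (of_int j1)" using assms(1) by (auto simp: lattice_def)
  obtain i2 j2 where v2: "v2 = pt (of_int i2) (of_int j2)" using assms(2) by (auto simp: lattice_def)
  define I J where "I = i2 - i1" and "J = j2 - j1"
  have "(of_int I)\<^sup>2 + of_int I * of_int J + (of_int J)\<^sup>2 = (1::real)"
    using dist_pt[of i2 j2 i1 j1] assms(3) unfolding v1 v2 I_def J_def by (simp add: dist_commute)
  then consider "J = 0" "I \<noteq> 0" | "I = 0" "J \<noteq> 0" | "I = - J" "J \<noteq> 0"
    using int_norm_eq_1_cases by fastforce
  moreover have "of_int I * (g \<bullet> u) + of_int J * (g \<bullet> w) = 0"
    using assms(4) unfolding v1 v2 I_def J_def by (simp add: inner_pt algebra_simps)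
  ultimately show ?thesis
  proof cases
    case 3
    then have "of_int J * (g \<bullet> w - g \<bullet> u) = 0"
      using \<open>of_int I * (g \<bullet> u) + of_int J * (g \<bullet> w) = 0\<close> by (simp add: algebra_simps)
    with 3 show ?thesis by simp
  qed simp_all
qed

lemma glued_triangle_vertices_in_lattice:
  assumes "unit_triangle t1" "unit_triangle t2" "t2 \<subseteq> plane" "vertices t1 \<subseteq> lattice"
    and "(t1 \<inter> t2) face_of t1" "(t1 \<inter> t2) face_of t2" "\<not> t1 \<inter> t2 \<subseteq> vertices t2"
  shows "vertices t2 \<subseteq> lattice"
proof -
  obtain a b c where t2: "t2 = convex hull {a, b, c}" "dist a b = 1" "dist b c = 1" "dist a c = 1"
    "\<not> affine_dependent {a, b, c}" "vertices t2 = {a, b, c}"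
    using assms(2) by (rule unit_triangleE)
  have "(t1 \<inter> t2) face_of convex hull {a, b, c}" "\<not> t1 \<inter> t2 \<subseteq> {a, b, c}"
    using assms(6,7) t2(1,6) by simp_all
  then obtain v1 v2 where v: "v1 \<in> {a, b, c}" "v2 \<in> {a, b, c}" "v1 \<noteq> v2"
    "v1 \<in> vertices (t1 \<inter> t2)" "v2 \<in> vertices (t1 \<inter> t2)"
    by (rule face_of_simplex_two_vertices[OF t2(5)])
  have lat: "v1 \<in> lattice" "v2 \<in> lattice"
    using v(4,5) extreme_point_of_face[OF assms(5)] assms(4) by (auto simp: vertices_def)
  have "x \<in> lattice" if x: "x \<in> {a, b, c}" for x
  proof (cases "x = v1 \<or> x = v2")
    case False
    have "x \<in> plane" using x t2(1) hull_subset[of "{a, b, c}" convex] assms(3) by blast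
    moreover have "dist v1 v2 = 1" by (rule unit_triangle_dist_vertices[OF t2(2-4) v(1-3)])
    moreover have "dist x v1 = 1" "dist x v2 = 1"
      using unit_triangle_dist_vertices[OF t2(2-4) x] v(1,2) False by auto
    ultimately show ?thesis by (intro lattice_third_vertex[OF lat])
  qed (use lat in auto)
  with t2(6) show ?thesis by blast
qed

lemma polyiamond_vertices_in_lattice:
  assumes P: "convex P" "aff_dim P = 2" "P \<subseteq> plane"
    and T: "finite T" "\<forall>t\<in>T. unit_triangle t" "P = \<Union>T" "edge_to_edge T"
    and t0: "t0 \<in> T" "vertices t0 \<subseteq> lattice"
  shows "\<forall>t\<in>T. vertices t \<subseteq> lattice"
proof -
  define V where "V = \<Union>(vertices ` T)"
  define L where "L = {t \<in> T. vertices t \<subseteq> lattice}"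
  have "finite V" using T(1,2) finite_vertices_unit_triangle by (simp add: V_def)
  have infinite: "infinite t" if "t \<in> T" for t
    using T(2) that infinite_unit_triangle by blast
  have "connected (P - V)"
    using connected_convex_diff_countable[OF P(1) _ countable_finite[OF \<open>finite V\<close>]] P(2)
    by (simp add: collinear_aff_dim)
  moreover have "closed t" if "t \<in> T" for t
    using T(2) that by (simp add: compact_imp_closed compact_unit_triangle)
  then have "closed (\<Union>L)" "closed (\<Union>(T - L))" using T(1) by (auto simp: L_def intro!: closed_Union)
  moreover have "P - V \<subseteq> \<Union>L \<union> \<Union>(T - L)" using T(3) by blast
  moreover have "\<Union>L \<inter> \<Union>(T - L) \<inter> (P - V) = {}"
  proof (rule ccontr)
    assume "\<Union>L \<inter> \<Union>(T - L) \<inter> (P - V) \<noteq> {}"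
    then obtain z t1 t2 where z: "z \<in> t1" "t1 \<in> L" "z \<in> t2" "t2 \<in> T - L" "z \<notin> V" by blast
    then have "t1 \<in> T" "t2 \<in> T" "t1 \<noteq> t2" by (auto simp: L_def)
    then have "(t1 \<inter> t2) face_of t1" "(t1 \<inter> t2) face_of t2" using T(4) by (auto simp: edge_to_edge_def)
    moreover have "\<not> t1 \<inter> t2 \<subseteq> vertices t2" using z \<open>t2 \<in> T\<close> by (auto simp: V_def)
    moreover have "t2 \<subseteq> plane" using \<open>t2 \<in> T\<close> T(3) P(3) by blast
    ultimately have "vertices t2 \<subseteq> lattice"
      using glued_triangle_vertices_in_lattice T(2) \<open>t1 \<in> T\<close> \<open>t2 \<in> T\<close> z(2) by (auto simp: L_def)
    with z(4) show False by (simp add: L_def)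
  qed
  moreover have "\<Union>L \<inter> (P - V) \<noteq> {}"
  proof -
    have "\<not> t0 \<subseteq> V"
      using infinite[OF t0(1)] \<open>finite V\<close> by (meson finite_subset)
    moreover have "t0 \<in> L" "t0 \<subseteq> P" using t0 T(3) by (auto simp: L_def)
    ultimately show ?thesis by blast
  qed
  ultimately have "\<Union>(T - L) \<inter> (P - V) = {}" unfolding connected_closed by blast
  then have "t \<subseteq> V" if "t \<in> T - L" for t using that T(3) by blast
  then have "T - L = {}"
    using infinite \<open>finite V\<close> by (meson DiffD1 equals0I finite_subset)
  then show ?thesis by (auto simp: L_def)
qed

lemma lattice_polyiamond_facet_direction:
  assumes T: "finite T" "\<forall>t\<in>T. unit_triangle t \<and> vertices t \<subseteq> lattice" "P = \<Union>T"
    and facet: "P \<subseteq> {x. g \<bullet> x \<le> b}" "(P \<inter> {x. g \<bullet> x = b}) facet_of P" "aff_dim P = 2"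
  shows "g \<bullet> u = 0 \<or> g \<bullet> w = 0 \<or> g \<bullet> u = g \<bullet> w"
proof -
  let ?H = "{x. g \<bullet> x = b}"
  have "aff_dim (P \<inter> ?H) = 1" "convex (P \<inter> ?H)"
    using facet(2,3) by (auto simp: facet_of_def face_of_imp_convex)
  then have "infinite (P \<inter> ?H)"
    using connected_finite_iff_sing[OF convex_connected[OF \<open>convex (P \<inter> ?H)\<close>]] by auto
  moreover have "P \<inter> ?H = (\<Union>t\<in>T. t \<inter> ?H)" using T(3) by blast
  ultimately have "\<not> (\<forall>t\<in>T. finite (t \<inter> ?H))"
    using finite_UN_I[OF T(1), of "\<lambda>t. t \<inter> ?H"] by auto
  then obtain t where t: "t \<in> T" "infinite (t \<inter> ?H)" by blast
  with T(2) have "unit_triangle t" by blast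
  then obtain a b' c where abc: "t = convex hull {a, b', c}" "dist a b' = 1" "dist b' c = 1" "dist a c = 1"
    "\<not> affine_dependent {a, b', c}" "vertices t = {a, b', c}"
    by (rule unit_triangleE)
  have "(t \<inter> ?H) face_of t"
    using T(3) t(1) facet(1) by (intro face_of_Int_supporting_hyperplane_le) (auto simp: abc(1))
  then have "(t \<inter> ?H) face_of convex hull {a, b', c}" by (simp add: abc(1))
  moreover have "\<not> t \<inter> ?H \<subseteq> {a, b', c}" using t(2) by (meson finite.emptyI finite_insert finite_subset)
  ultimately obtain v1 v2 where v: "v1 \<in> {a, b', c}" "v2 \<in> {a, b', c}" "v1 \<noteq> v2"
    "v1 \<in> vertices (t \<inter> ?H)" "v2 \<in> vertices (t \<inter> ?H)"
    by (rule face_of_simplex_two_vertices[OF abc(5)])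
  have "v1 \<in> lattice" "v2 \<in> lattice" using v(1,2) abc(6) T(2) t(1) by blast+
  moreover have "dist v1 v2 = 1" by (rule unit_triangle_dist_vertices[OF abc(2-4) v(1-3)])
  moreover have "g \<bullet> v1 = g \<bullet> v2" using v(4,5) by (simp add: vertices_def extreme_point_of_def)
  ultimately show ?thesis by (rule lattice_edge_direction)
qed

lemma hexagon_subset_halfspace:
  assumes g: "g \<bullet> u = 0 \<or> g \<bullet> w = 0 \<or> g \<bullet> u = g \<bullet> w"
    and V: "V \<subseteq> plane" "\<forall>v\<in>V. g \<bullet> v \<le> b"
    and ends: "of_int a1 \<in> X ` V" "of_int a2 \<in> X ` V" "of_int b1 \<in> Y ` V" "of_int b2 \<in> Y ` V"
      "of_int c1 \<in> Z ` V" "of_int c2 \<in> Z ` V"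
  shows "hexagon p0 u w a1 a2 b1 b2 c1 c2 \<subseteq> {x. g \<bullet> x \<le> b}"
proof
  have along: "g \<bullet> z \<le> b"
    if L: "\<forall>p\<in>plane. g \<bullet> p = d + k * L p" "lo \<in> L ` V" "hi \<in> L ` V"
      and z: "z \<in> plane" "lo \<le> L z" "L z \<le> hi" for L d k lo hi z
  proof -
    have "d + k * L v \<le> b" if "v \<in> V" for v
      using L(1) V(2) that subsetD[OF V(1) that] by fastforce
    with L(2,3) have "d + k * lo \<le> b" "d + k * hi \<le> b" by auto
    then have "d + k * L z \<le> b" using z(2,3) by (rule affine_le_between)
    with L(1) z(1) show ?thesis by simp
  qed
  have inner_plane: "g \<bullet> p = g \<bullet> p0 + X p * (g \<bullet> u) + Y p * (g \<bullet> w)" if "p \<in> plane" for p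
    using inner_pt[of g "X p" "Y p"] pt_X_Y[OF that] by simp
  fix z assume "z \<in> hexagon p0 u w a1 a2 b1 b2 c1 c2"
  then have z: "z \<in> plane" "of_int a1 \<le> X z" "X z \<le> of_int a2" "of_int b1 \<le> Y z" "Y z \<le> of_int b2"
    "of_int c1 \<le> Z z" "Z z \<le> of_int c2"
    by (auto simp: hexagon_eq)
  from g consider "g \<bullet> u = 0" | "g \<bullet> w = 0" | "g \<bullet> u = g \<bullet> w" by blast
  then show "z \<in> {x. g \<bullet> x \<le> b}"
  proof cases
    case 1
    then have "\<forall>p\<in>plane. g \<bullet> p = g \<bullet> p0 + (g \<bullet> w) * Y p" using inner_plane by simp
    with ends z show ?thesis
      using along[where L=Y and d="g \<bullet> p0" and k="g \<bullet> w" and lo="of_int b1" and hi="of_int b2"]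
      by simp
  next
    case 2
    then have "\<forall>p\<in>plane. g \<bullet> p = g \<bullet> p0 + (g \<bullet> u) * X p" using inner_plane by simp
    with ends z show ?thesis
      using along[where L=X and d="g \<bullet> p0" and k="g \<bullet> u" and lo="of_int a1" and hi="of_int a2"]
      by simp
  next
    case 3
    then have "\<forall>p\<in>plane. g \<bullet> p = g \<bullet> p0 + (g \<bullet> u) * Z p"
      using inner_plane by (simp add: Z_def algebra_simps)
    with ends z show ?thesis
      using along[where L=Z and d="g \<bullet> p0" and k="g \<bullet> u" and lo="of_int c1" and hi="of_int c2"]
      by simp
  qed
qed

lemma lattice_bounding_hexagon:
  assumes "finite V" "V \<noteq> {}" "V \<subseteq> lattice"
  obtains a1 a2 b1 b2 c1 c2 where "V \<subseteq> hexagon p0 u w a1 a2 b1 b2 c1 c2"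
    "of_int a1 \<in> X ` V" "of_int a2 \<in> X ` V" "of_int b1 \<in> Y ` V" "of_int b2 \<in> Y ` V"
    "of_int c1 \<in> Z ` V" "of_int c2 \<in> Z ` V"
proof -
  note bounds = finite_Ints_bounds[OF assms(1,2)]
  obtain a1 a2 where a: "of_int a1 \<in> X ` V" "of_int a2 \<in> X ` V"
    "\<And>v. v \<in> V \<Longrightarrow> of_int a1 \<le> X v \<and> X v \<le> of_int a2"
    using bounds[of X] assms(3) lattice_Ints by blast
  obtain b1 b2 where b: "of_int b1 \<in> Y ` V" "of_int b2 \<in> Y ` V"
    "\<And>v. v \<in> V \<Longrightarrow> of_int b1 \<le> Y v \<and> Y v \<le> of_int b2"
    using bounds[of Y] assms(3) lattice_Ints by blast
  obtain c1 c2 where c: "of_int c1 \<in> Z ` V" "of_int c2 \<in> Z ` V"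
    "\<And>v. v \<in> V \<Longrightarrow> of_int c1 \<le> Z v \<and> Z v \<le> of_int c2"
    using bounds[of Z] assms(3) lattice_Ints by blast
  have "V \<subseteq> hexagon p0 u w a1 a2 b1 b2 c1 c2"
    using assms(3) lattice_subset_plane a(3) b(3) c(3) by (auto simp: hexagon_eq)
  then show thesis by (rule that[OF _ a(1,2) b(1,2) c(1,2)])
qed

lemma lattice_polyiamond_eq_hexagon:
  assumes P: "convex P" "aff_dim P = 2" "affine hull P = plane"
    and T: "finite T" "T \<noteq> {}" "\<forall>t\<in>T. unit_triangle t \<and> vertices t \<subseteq> lattice" "P = \<Union>T"
  obtains a1 a2 b1 b2 c1 c2 where "P = hexagon p0 u w a1 a2 b1 b2 c1 c2"
proof -
  define V where "V = \<Union>(vertices ` T)"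
  have "finite V" using T(1,3) finite_vertices_unit_triangle by (simp add: V_def)
  moreover have "V \<subseteq> lattice" using T(3) by (auto simp: V_def)
  moreover have "V \<subseteq> P" unfolding V_def T(4) using vertices_subset by blast
  moreover have hull: "P = convex hull V"
    unfolding V_def using P(1) T(3,4) by (intro convex_Union_unit_triangles) auto
  moreover have "V \<noteq> {}" using hull P(2) by auto
  ultimately have V: "finite V" "V \<subseteq> lattice" "V \<subseteq> P" "V \<noteq> {}" by blast+
  then obtain a1 a2 b1 b2 c1 c2 where H: "V \<subseteq> hexagon p0 u w a1 a2 b1 b2 c1 c2"
    and ends: "of_int a1 \<in> X ` V" "of_int a2 \<in> X ` V" "of_int b1 \<in> Y ` V" "of_int b2 \<in> Y ` V"
      "of_int c1 \<in> Z ` V" "of_int c2 \<in> Z ` V"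
    using lattice_bounding_hexagon by metis
  let ?H = "hexagon p0 u w a1 a2 b1 b2 c1 c2"
  from hull H have "P \<subseteq> ?H" using convex_hexagon by (simp add: hull_minimal)
  moreover have "?H \<subseteq> P"
  proof
    fix z assume z: "z \<in> ?H"
    show "z \<in> P"
    proof (rule polyhedron_facet_halfspaces)
      show "polyhedron P" unfolding hull using V(1) by (intro polytope_imp_polyhedron) (auto simp: polytope_def)
      show "z \<in> affine hull P" using z P(3) by (simp add: hexagon_eq)
      fix g b assume "P \<subseteq> {x. g \<bullet> x \<le> b}" "(P \<inter> {x. g \<bullet> x = b}) facet_of P"
      then have "g \<bullet> u = 0 \<or> g \<bullet> w = 0 \<or> g \<bullet> u = g \<bullet> w"
        using lattice_polyiamond_facet_direction[OF T(1,3,4)] P(2) by blast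
      then have "?H \<subseteq> {x. g \<bullet> x \<le> b}"
        using V(2,3) lattice_subset_plane \<open>P \<subseteq> {x. g \<bullet> x \<le> b}\<close> ends
        by (intro hexagon_subset_halfspace) auto
      with z show "g \<bullet> z \<le> b" by blast
    qed
  qed
  ultimately show thesis using that by blast
qed

end

lemma triangular_frame_of_unit_triangle:
  assumes "dist a b = 1" "dist b c = 1" "dist a c = 1"
  shows "triangular_frame (b - a) (c - a)"
proof
  have sq: "(x - y) \<bullet> (x - y) = 1" if "dist y x = 1" for x y :: "real^3"
    using that by (metis dist_norm norm_minus_commute power2_norm_eq_inner power_one)
  show "(b - a) \<bullet> (b - a) = 1" "(c - a) \<bullet> (c - a) = 1" using assms(1,3) by (simp_all add: sq)
  moreover have "((c - a) - (b - a)) \<bullet> ((c - a) - (b - a)) = 1" using sq[OF assms(2)] by simp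
  ultimately show "(b - a) \<bullet> (c - a) = 1/2"
    by (simp add: inner_diff_left inner_diff_right inner_commute)
qed

theorem convex_polyiamond_eq_hexagon:
  assumes "convex_polyiamond P"
  obtains p0 u w a1 a2 b1 b2 c1 c2
  where "triangular_frame u w" "P = hexagon p0 u w a1 a2 b1 b2 c1 c2"
proof -
  obtain T where P: "convex P" "aff_dim P = 2"
    and T: "finite T" "T \<noteq> {}" "\<forall>t\<in>T. unit_triangle t" "P = \<Union>T" "edge_to_edge T"
    using assms unfolding convex_polyiamond_def polyiamond_iff by blast
  then obtain t0 where "t0 \<in> T" by blast
  with T(3) have "unit_triangle t0" by blast
  then obtain a b c where t0: "t0 = convex hull {a, b, c}" "dist a b = 1" "dist b c = 1" "dist a c = 1"
    "vertices t0 = {a, b, c}"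
    by (rule unit_triangleE)
  interpret triangular_frame a "b - a" "c - a"
    using triangular_frame_of_unit_triangle[OF t0(2-4)] .
  have abc: "pt 0 0 = a" "pt 1 0 = b" "pt 0 1 = c" by (simp_all add: pt_def)
  have "{a, b, c} \<subseteq> P" using t0(1) T(4) \<open>t0 \<in> T\<close> hull_subset[of "{a, b, c}" convex] by blast
  then have "plane \<subseteq> affine hull P" unfolding plane_eq_affine_hull abc by (rule hull_mono)
  then have hull: "affine hull P = plane"
    using affine_dim_equal[OF affine_plane affine_affine_hull] aff_dim_plane P(2) by force
  have "vertices t0 \<subseteq> lattice"
    using pt_in_lattice[of 0 0] pt_in_lattice[of 1 0] pt_in_lattice[of 0 1] by (simp add: t0(5) abc)
  moreover have "P \<subseteq> plane" using hull hull_subset[of P affine] by blast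
  ultimately have "\<forall>t\<in>T. vertices t \<subseteq> lattice"
    using P T \<open>t0 \<in> T\<close> by (intro polyiamond_vertices_in_lattice)
  with P hull T obtain a1 a2 b1 b2 c1 c2 where "P = hexagon a (b - a) (c - a) a1 a2 b1 b2 c1 c2"
    by (metis lattice_polyiamond_eq_hexagon)
  with triangular_frame_axioms show thesis by (rule that)
qed

section \<open>Truncated boxes\<close>

lemma UNIV_3_distinct:
  fixes i j k :: 3
  assumes "i \<noteq> j" "i \<noteq> k" "j \<noteq> k"
  shows "UNIV = {i, j, k}"
  by (rule card_subset_eq[symmetric]) (use assms in \<open>auto simp: card_insert_if\<close>)

lemma sum_UNIV_3_distinct:
  fixes g :: "3 \<Rightarrow> 'a::comm_monoid_add"
  assumes "i \<noteq> j" "i \<noteq> k" "j \<noteq> k"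
  shows "sum g UNIV = g i + g j + g k"
  unfolding UNIV_3_distinct[OF assms] using assms by (simp add: add.assoc)

lemma other_indices_3E:
  fixes k :: 3
  obtains i j where "i \<noteq> j" "i \<noteq> k" "j \<noteq> k"
  using exhaust_3[of k] that[of 1 2] that[of 1 3] that[of 2 3] by auto

definition truncated_box :: "(3 \<Rightarrow> int) \<Rightarrow> (3 \<Rightarrow> int) \<Rightarrow> int \<Rightarrow> (real^3) set" where
  "truncated_box lo hi s =
     {x. (\<forall>k. of_int (lo k) \<le> x$k \<and> x$k \<le> of_int (hi k)) \<and> (\<Sum>k\<in>UNIV. x$k) \<le> of_int s}"

definition box_constraints :: "(3 \<Rightarrow> int) \<Rightarrow> (3 \<Rightarrow> int) \<Rightarrow> int \<Rightarrow> ((real^3) \<times> real) set" where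
  "box_constraints lo hi s = range (\<lambda>k. (- axis k 1, - of_int (lo k))) \<union> range (\<lambda>k. (axis k 1, of_int (hi k)))
     \<union> {(\<Sum>k\<in>UNIV. axis k 1, of_int s)}"

lemma truncated_box_eq_halfspaces:
  "truncated_box lo hi s = {x. \<forall>(a, b)\<in>box_constraints lo hi s. a \<bullet> x \<le> b}"
proof (intro set_eqI iffI)
  fix x assume "x \<in> truncated_box lo hi s"
  then show "x \<in> {x. \<forall>(a, b)\<in>box_constraints lo hi s. a \<bullet> x \<le> b}"
    by (auto simp: truncated_box_def box_constraints_def inner_axis' inner_sum_left)
next
  fix x assume x: "x \<in> {x. \<forall>(a, b)\<in>box_constraints lo hi s. a \<bullet> x \<le> b}"
  have "(- axis k 1, - of_int (lo k)) \<in> box_constraints lo hi s"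
    "(axis k 1, of_int (hi k)) \<in> box_constraints lo hi s"
    "(\<Sum>k\<in>UNIV. axis k 1, of_int s) \<in> box_constraints lo hi s" for k
    by (simp_all add: box_constraints_def)
  moreover have "a \<bullet> x \<le> b" if "(a, b) \<in> box_constraints lo hi s" for a b
    using x that by fastforce
  ultimately have "- axis k 1 \<bullet> x \<le> - of_int (lo k)" "axis k 1 \<bullet> x \<le> of_int (hi k)"
    "(\<Sum>k\<in>UNIV. axis k 1) \<bullet> x \<le> of_int s" for k
    by blast+
  then show "x \<in> truncated_box lo hi s"
    by (simp add: truncated_box_def inner_axis' inner_sum_left)
qed

lemma box_constraints_finite: "finite (box_constraints lo hi s)"
  by (simp add: box_constraints_def)

lemma box_constraints_nonzero: "(a, b) \<in> box_constraints lo hi s \<Longrightarrow> a \<noteq> 0"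
  by (auto simp: box_constraints_def vec_eq_iff axis_def)

lemma interior_truncated_box:
  assumes "\<forall>k. of_int (lo k) < z$k \<and> z$k < of_int (hi k)" "(\<Sum>k\<in>UNIV. z$k) < of_int s"
  shows "z \<in> interior (truncated_box lo hi s)"
  unfolding truncated_box_eq_halfspaces
  by (rule interior_halfspaces_Inter[OF box_constraints_finite])
     (use assms in \<open>auto simp: box_constraints_def inner_axis' inner_sum_left\<close>)

lemma truncated_box_facets:
  assumes "interior (truncated_box lo hi s) \<noteq> {}" "F facet_of truncated_box lo hi s"
  shows "(\<exists>k t. t \<in> {lo k, hi k} \<and> F = truncated_box lo hi s \<inter> {x. x$k = of_int t})
    \<or> F = truncated_box lo hi s \<inter> {x. (\<Sum>k\<in>UNIV. x$k) = of_int s}"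
proof -
  obtain a b where ab: "(a, b) \<in> box_constraints lo hi s" and F: "F = truncated_box lo hi s \<inter> {x. a \<bullet> x = b}"
    by (rule facet_of_halfspaces_Inter[OF truncated_box_eq_halfspaces box_constraints_finite _ assms])
       (metis box_constraints_nonzero)
  from ab consider (lower) k where "a = - axis k 1" "b = - of_int (lo k)"
    | (upper) k where "a = axis k 1" "b = of_int (hi k)"
    | (top) "a = (\<Sum>k\<in>UNIV. axis k 1)" "b = of_int s"
    unfolding box_constraints_def by auto
  then show ?thesis
  proof cases
    case lower
    then have "F = truncated_box lo hi s \<inter> {x. x$k = of_int (lo k)}" by (auto simp: F inner_axis')
    then show ?thesis by blast
  next
    case upper
    then have "F = truncated_box lo hi s \<inter> {x. x$k = of_int (hi k)}" by (auto simp: F inner_axis')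
    then show ?thesis by blast
  qed (simp add: F inner_sum_left inner_axis')
qed

lemma polytope_truncated_box: "polytope (truncated_box lo hi s)"
proof -
  have "truncated_box lo hi s = cbox (\<chi> k. of_int (lo k)) (\<chi> k. of_int (hi k))
      \<inter> {x. (\<Sum>k\<in>UNIV. axis k 1) \<bullet> x \<le> of_int s}"
    by (auto simp: truncated_box_def mem_box_cart inner_axis' inner_sum_left)
  then show ?thesis by (simp add: polytope_Int_polyhedron polytope_interval polyhedron_halfspace_le)
qed

section \<open>Regular tetrahedral frames\<close>

definition tetrahedral_frame :: "(3 \<Rightarrow> real^3) \<Rightarrow> bool" where
  "tetrahedral_frame f \<longleftrightarrow> (\<forall>i j. f i \<bullet> f j = (if i = j then 1 else 1/2))"

lemma triangular_frame_tetrahedral_pair: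
  "tetrahedral_frame f \<Longrightarrow> i \<noteq> j \<Longrightarrow> triangular_frame (f i) (f j)"
  by (simp add: tetrahedral_frame_def triangular_frame_def)

text \<open>The apex \<open>e\<close> of a regular tetrahedron over the triangle \<open>0, u, w\<close>, seen from the
  centroid \<open>(u + w)/3\<close>, lies at height \<open>sqrt (2/3)\<close>, and \<open>norm (u \<times> w) = sqrt 3 / 2\<close>.\<close>
lemma tetrahedral_frame_extend:
  assumes "triangular_frame u w"
  obtains f where "tetrahedral_frame f" "f 1 - f 3 = u" "f 2 - f 3 = w"
proof -
  have uu: "u \<bullet> u = 1" and ww: "w \<bullet> w = 1" and uw: "u \<bullet> w = 1/2" "w \<bullet> u = 1/2"
    using assms by (simp_all add: triangular_frame_def inner_commute)
  define n where "n = cross3 u w"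
  have un: "u \<bullet> n = 0" "w \<bullet> n = 0" "n \<bullet> u = 0" "n \<bullet> w = 0"
    unfolding n_def using dot_cross_self by (simp_all add: inner_commute)
  have "(norm n)\<^sup>2 = (norm u)\<^sup>2 * (norm w)\<^sup>2 - (u \<bullet> w)\<^sup>2" unfolding n_def by (rule norm_cross)
  then have "n \<bullet> n = (u \<bullet> u) * (w \<bullet> w) - (u \<bullet> w)\<^sup>2" by (simp only: power2_norm_eq_inner)
  then have nn: "n \<bullet> n = 3/4" using uu ww uw by (simp add: power2_eq_square)
  define e where "e = (-1/3) *\<^sub>R (u + w) + sqrt (8/9) *\<^sub>R n"
  have "e \<bullet> e = 1" "e \<bullet> u = -1/2" "e \<bullet> w = -1/2" "u \<bullet> e = -1/2" "w \<bullet> e = -1/2"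
    unfolding e_def using uu ww uw un nn
    by (simp_all add: inner_add_left inner_add_right algebra_simps)
  then have "tetrahedral_frame (\<lambda>k. if k = 1 then u + e else if k = 2 then w + e else e)"
    unfolding tetrahedral_frame_def forall_3 using uu ww uw
    by (simp add: inner_add_left inner_add_right)
  then show thesis by (rule that) simp_all
qed

definition frame_map :: "(3 \<Rightarrow> real^3) \<Rightarrow> real^3 \<Rightarrow> real^3" where
  "frame_map f x = (\<Sum>k\<in>UNIV. x$k *\<^sub>R f k)"

lemma linear_frame_map: "linear (frame_map f)"
  by (rule linearI) (simp_all add: frame_map_def scaleR_add_left sum.distrib scaleR_sum_right)

text \<open>Pairing with \<open>f i\<close> gives \<open>(x$i + x$1 + x$2 + x$3) / 2\<close>, from which \<open>x\<close> is recovered.\<close>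
lemma inj_frame_map:
  assumes "tetrahedral_frame f"
  shows "inj (frame_map f)"
  unfolding linear_injective_0[OF linear_frame_map]
proof (intro allI impI)
  fix x assume "frame_map f x = 0"
  then have "frame_map f x \<bullet> f 1 = 0" "frame_map f x \<bullet> f 2 = 0" "frame_map f x \<bullet> f 3 = 0" by simp_all
  then have "x$1 + x$2/2 + x$3/2 = 0" "x$1/2 + x$2 + x$3/2 = 0" "x$1/2 + x$2/2 + x$3 = 0"
    using assms[unfolded tetrahedral_frame_def]
    by (simp_all add: frame_map_def sum_3 inner_add_left)
  then show "x = 0" by (simp add: vec_eq_iff forall_3)
qed

lemma frame_map_box_slice:
  assumes ijk: "i \<noteq> j" "i \<noteq> k" "j \<noteq> k" and t: "lo k \<le> t" "t \<le> hi k"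
  shows "(\<lambda>x. p + frame_map f x) ` (truncated_box lo hi s \<inter> {x. x$k = of_int t})
    = hexagon (p + of_int t *\<^sub>R f k) (f i) (f j) (lo i) (hi i) (lo j) (hi j) (lo i + lo j) (s - t)"
    (is "?L = ?R")
proof
  note sum = sum_UNIV_3_distinct[OF ijk]
  have map: "p + frame_map f x = (p + x$k *\<^sub>R f k) + x$i *\<^sub>R f i + x$j *\<^sub>R f j" for x
    by (simp add: frame_map_def sum algebra_simps)
  show "?L \<subseteq> ?R"
  proof clarify
    fix x assume x: "x \<in> truncated_box lo hi s" "x$k = of_int t"
    then have "of_int (lo i) \<le> x$i" "x$i \<le> of_int (hi i)" "of_int (lo j) \<le> x$j" "x$j \<le> of_int (hi j)"
      "x$i + x$j + x$k \<le> of_int s"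
      by (auto simp: truncated_box_def sum)
    with x(2) show "p + frame_map f x \<in> ?R"
      unfolding hexagon_def map by (intro CollectI exI[of _ "x$i"] exI[of _ "x$j"]) auto
  qed
  show "?R \<subseteq> ?L"
  proof
    fix q assume "q \<in> ?R"
    then obtain y z where q: "q = p + of_int t *\<^sub>R f k + y *\<^sub>R f i + z *\<^sub>R f j"
      and yz: "of_int (lo i) \<le> y" "y \<le> of_int (hi i)" "of_int (lo j) \<le> z" "z \<le> of_int (hi j)"
        "y + z \<le> of_int (s - t)"
      unfolding hexagon_def by blast
    define x :: "real^3" where "x = (\<chi> m. if m = i then y else if m = j then z else of_int t)"
    have x: "x$i = y" "x$j = z" "x$k = of_int t" using ijk by (simp_all add: x_def)
    have "m = i \<or> m = j \<or> m = k" for m using UNIV_3_distinct[OF ijk] by blast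
    then have "x \<in> truncated_box lo hi s"
      unfolding truncated_box_def using yz t x ijk by (auto simp: sum x_def)
    moreover have "q = p + frame_map f x" unfolding q map x ..
    ultimately show "q \<in> ?L" using x(3) by blast
  qed
qed

lemma frame_map_box_top:
  "(\<lambda>x. p + frame_map f x) ` (truncated_box lo hi s \<inter> {x. (\<Sum>k\<in>UNIV. x$k) = of_int s})
    = hexagon (p + of_int s *\<^sub>R f 3) (f 1 - f 3) (f 2 - f 3) (lo 1) (hi 1) (lo 2) (hi 2) (s - hi 3) (s - lo 3)"
  (is "?L = ?R")
proof
  have map: "p + frame_map f x
      = (p + (x$1 + x$2 + x$3) *\<^sub>R f 3) + x$1 *\<^sub>R (f 1 - f 3) + x$2 *\<^sub>R (f 2 - f 3)" for x
    by (simp add: frame_map_def sum_3 algebra_simps)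
  show "?L \<subseteq> ?R"
  proof clarify
    fix x assume "x \<in> truncated_box lo hi s" "(\<Sum>k\<in>UNIV. x$k) = of_int s"
    then have "of_int (lo 1) \<le> x$1" "x$1 \<le> of_int (hi 1)" "of_int (lo 2) \<le> x$2" "x$2 \<le> of_int (hi 2)"
      "of_int (lo 3) \<le> x$3" "x$3 \<le> of_int (hi 3)" "x$1 + x$2 + x$3 = of_int s"
      by (auto simp: truncated_box_def sum_3)
    then show "p + frame_map f x \<in> ?R"
      unfolding hexagon_def map by (intro CollectI exI[of _ "x$1"] exI[of _ "x$2"]) auto
  qed
  show "?R \<subseteq> ?L"
  proof
    fix q assume "q \<in> ?R"
    then obtain y z where q: "q = p + of_int s *\<^sub>R f 3 + y *\<^sub>R (f 1 - f 3) + z *\<^sub>R (f 2 - f 3)"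
      and yz: "of_int (lo 1) \<le> y" "y \<le> of_int (hi 1)" "of_int (lo 2) \<le> z" "z \<le> of_int (hi 2)"
        "of_int (s - hi 3) \<le> y + z" "y + z \<le> of_int (s - lo 3)"
      unfolding hexagon_def by blast
    define x :: "real^3" where "x = vector [y, z, of_int s - y - z]"
    have "x \<in> truncated_box lo hi s" "(\<Sum>k\<in>UNIV. x$k) = of_int s"
      using yz by (auto simp: truncated_box_def x_def sum_3 forall_3)
    moreover have "q = p + frame_map f x" unfolding q map by (simp add: x_def)
    ultimately show "q \<in> ?L" by blast
  qed
qed

section \<open>Domes\<close>

lemma facet_of_truncated_box_image:
  assumes f: "tetrahedral_frame f" and int: "interior (truncated_box lo hi s) \<noteq> {}"
    and F: "F facet_of (\<lambda>x. p + frame_map f x) ` truncated_box lo hi s"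
      "F \<noteq> (\<lambda>x. p + frame_map f x) ` (truncated_box lo hi s \<inter> {x. (\<Sum>k\<in>UNIV. x$k) = of_int s})"
  obtains q i j a1 a2 b1 b2 c1 c2 where "i \<noteq> j" "F = hexagon q (f i) (f j) a1 a2 b1 b2 c1 c2"
proof -
  let ?m = "\<lambda>x. p + frame_map f x" and ?B = "truncated_box lo hi s"
  define G where "G = {x \<in> ?B. ?m x \<in> F}"
  have FG: "F = ?m ` G" using facet_of_imp_subset[OF F(1)] by (auto simp: G_def)
  with F(1) have "G facet_of ?B"
    by (simp add: facet_of_injective_affine_image[OF linear_frame_map inj_frame_map[OF f]])
  with F(2) FG obtain k t where t: "t \<in> {lo k, hi k}" and G: "G = ?B \<inter> {x. x$k = of_int t}"
    using truncated_box_facets[OF int] by blast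
  obtain i j where ijk: "i \<noteq> j" "i \<noteq> k" "j \<noteq> k" by (rule other_indices_3E)
  obtain z where "z \<in> ?B" using int interior_subset by blast
  then have "of_int (lo k) \<le> z$k" "z$k \<le> of_int (hi k)" by (simp_all add: truncated_box_def)
  then have "lo k \<le> hi k" by (metis order_trans of_int_le_iff)
  with t have "lo k \<le> t" "t \<le> hi k" by auto
  with FG G have "F = hexagon (p + of_int t *\<^sub>R f k) (f i) (f j) (lo i) (hi i) (lo j) (hi j) (lo i + lo j) (s - t)"
    using frame_map_box_slice[OF ijk] by simp
  with ijk(1) show thesis by (rule that)
qed

lemma can_be_domed_truncated_box_top:
  assumes f: "tetrahedral_frame f" and int: "interior (truncated_box lo hi s) \<noteq> {}"
    and top: "aff_dim (truncated_box lo hi s \<inter> {x. (\<Sum>k\<in>UNIV. x$k) = of_int s}) = 2"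
  shows "can_be_domed ((\<lambda>x. p + frame_map f x) ` (truncated_box lo hi s \<inter> {x. (\<Sum>k\<in>UNIV. x$k) = of_int s}))"
proof -
  let ?m = "\<lambda>x. p + frame_map f x" and ?B = "truncated_box lo hi s"
  let ?top = "?B \<inter> {x. (\<Sum>k\<in>UNIV. x$k) = of_int s}"
  note lin = linear_frame_map[of f] and inj = inj_frame_map[OF f]
  have dim: "aff_dim ?B = 3" using aff_dim_nonempty_interior[OF int] by simp
  have "?m ` ?B = (+) p ` frame_map f ` ?B" by (simp add: image_image)
  then have "polytope (?m ` ?B)"
    using polytope_linear_image[OF lin polytope_truncated_box] by (simp add: polytope_translation_eq)
  then have Q: "convex_polyhedron (?m ` ?B)"
    using dim by (simp add: convex_polyhedron_def aff_dim_injective_affine_image[OF lin inj])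
  have "?top = ?B \<inter> {x. (\<Sum>k\<in>UNIV. axis k 1) \<bullet> x = of_int s}" by (simp add: inner_sum_left inner_axis')
  also have "\<dots> face_of ?B"
    by (rule face_of_Int_supporting_hyperplane_le[OF polytope_imp_convex[OF polytope_truncated_box]])
       (auto simp: truncated_box_def inner_sum_left inner_axis')
  finally have "?top facet_of ?B" using top dim by (auto simp: facet_of_def)
  then have P: "?m ` ?top facet_of ?m ` ?B" by (simp add: facet_of_injective_affine_image[OF lin inj])
  have "convex_polyiamond F" if F: "F facet_of ?m ` ?B" "F \<noteq> ?m ` ?top" for F
  proof -
    obtain q i j a1 a2 b1 b2 c1 c2 where "i \<noteq> j" "F = hexagon q (f i) (f j) a1 a2 b1 b2 c1 c2"
      using facet_of_truncated_box_image[OF f int F] .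
    moreover have "aff_dim F = 2" using F(1) Q by (simp add: facet_of_def convex_polyhedron_def)
    ultimately show ?thesis
      using triangular_frame.convex_polyiamond_hexagon[OF triangular_frame_tetrahedral_pair[OF f]] by simp
  qed
  with Q P show ?thesis unfolding can_be_domed_def by blast
qed

theorem (in triangular_frame) hexagon_can_be_domed:
  assumes "aff_dim (hexagon p0 u w a1 a2 b1 b2 c1 c2) = 2"
  shows "can_be_domed (hexagon p0 u w a1 a2 b1 b2 c1 c2)"
proof -
  let ?H = "hexagon p0 u w a1 a2 b1 b2 c1 c2"
  obtain f where f: "tetrahedral_frame f" "f 1 - f 3 = u" "f 2 - f 3 = w"
    using tetrahedral_frame_extend[OF triangular_frame_axioms] by blast
  define lo hi :: "3 \<Rightarrow> int"
    where "lo k = (if k = 1 then a1 else if k = 2 then b1 else - c2)"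
      and "hi k = (if k = 1 then a2 else if k = 2 then b2 else - c1)" for k
  let ?top = "truncated_box lo hi 0 \<inter> {x. (\<Sum>k\<in>UNIV. x$k) = of_int 0}"
  have top: "(\<lambda>x. p0 + frame_map f x) ` ?top = ?H"
    using frame_map_box_top[of p0 f lo hi 0] f by (simp add: lo_def hi_def)
  then have "aff_dim ?top = 2"
    using assms aff_dim_injective_affine_image[OF linear_frame_map inj_frame_map[OF f(1)]] by metis
  moreover have "interior (truncated_box lo hi 0) \<noteq> {}"
  proof -
    have "rel_interior ?H \<noteq> {}" using assms rel_interior_eq_empty[OF convex_hexagon] by fastforce
    then obtain q where q: "q \<in> rel_interior ?H" by blast
    define z :: "real^3" where "z = vector [X q, Y q, - Z q - (of_int c2 - Z q) / 2]"
    have z: "z$1 = X q" "z$2 = Y q" "z$3 = - Z q - (of_int c2 - Z q) / 2" by (simp_all add: z_def)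
    note strict = rel_interior_hexagon[OF assms q]
    then have "- of_int c2 < z$3" "z$3 < - of_int c1" "z$1 + z$2 + z$3 < 0"
      unfolding z Z_def by (auto simp: field_simps)
    with strict have "z \<in> interior (truncated_box lo hi 0)"
      by (intro interior_truncated_box) (simp_all add: forall_3 sum_3 z lo_def hi_def)
    then show ?thesis by blast
  qed
  ultimately show ?thesis using can_be_domed_truncated_box_top[OF f(1), of lo hi 0 p0] top by simp
qed

theorem lemma13:
  fixes P :: "(real^3) set"
  assumes "convex_polyiamond P"
  shows "can_be_domed P"
proof -
  obtain p0 u w a1 a2 b1 b2 c1 c2
    where "triangular_frame u w" "P = hexagon p0 u w a1 a2 b1 b2 c1 c2"
    using convex_polyiamond_eq_hexagon[OF assms] .
  moreover have "aff_dim P = 2" using assms by (simp add: convex_polyiamond_def polyiamond_def)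
  ultimately show ?thesis using triangular_frame.hexagon_can_be_domed by blast
qed

end
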